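(* Let $(\mathbb{X},d_{\mathbb{X}})$ and $(\Xi,d_\Xi)$ be metric spaces, and let $P$, $P^\nu$ ($\nu\in\mathbb{N}$) be probability measures on $(\Xi,\mathcal{B}(\Xi))$ with $P^\nu$ converging weakly to $P$. Let $f,f^\nu:\Xi\times\mathbb{X}\to\overline{\mathbb{R}}$ satisfy, for each $x\in\mathbb{X}$: (a) $f(\cdot,x)$ and $f^\nu(\cdot,x)$, $\nu\in\mathbb{N}$, are measurable; (b) $\displaystyle\liminf_{K\to+\infty}\ \liminf_{(\nu,y)\to(+\infty,x)}\mathbb{E}^{P^\nu}\big[f^\nu(\xi,y)\,\mathbb{1}\{\xi:f^\nu(\xi,y)\le -K\}\big]=0$; (c) for $P$-a.e. $\xi\in\Xi$, $\displaystyle\liminf_{(\nu,y,\zeta)\to(+\infty,x,\xi)}f^\nu(\zeta,y)\ge f(\xi,x)$. Suppose moreover that for each $x\in\mathbb{X}$ either $E^P[f](x)=+\infty$ or there exists a sequence $\{x^\nu\}_{\nu\in\mathbb{N}}\subset\mathbb{X}$ converging to $x$ such that (i) $\displaystyle\limsup_{K\to+\infty}\ \limsup_{\nu\to+\infty}\mathbb{E}^{P^\nu}\big[f^\nu(\xi,x^\nu)\,\mathbb{1}\{\xi:f^\nu(\xi,x^\nu)\ge K\}\big]=0$; (ii) for $P$-a.e. $\xi\in\Xi$, $\displaystyle\limsup_{(\nu,\zeta)\to(+\infty,\xi)}f^\nu(\zeta,x^\nu)\le f(\xi,x)$. Then the functions $E^{P^\nu}[f^\nu]$ epi-converge to $E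^{P}[f]$.
   Context: $\overline{\mathbb{R}}=\mathbb{R}\cup\{-\infty,+\infty\}$; weak convergence means $\int\varphi\,dP^\nu\to\int\varphi\,dP$ for all bounded continuous $\varphi$. For a probability $\mu$ and measurable $\overline{\mathbb{R}}$-valued $g$, $\mathbb{E}^\mu[g]:=\int g_+\,d\mu-\int g_-\,d\mu$ with conventions $+\infty-\alpha=+\infty$ for all $\alpha\in\overline{\mathbb{R}}$ and $\beta-(+\infty)=-\infty$ for $\beta\in\mathbb{R}$; $E^{Q}[h](x):=\mathbb{E}^{Q}[h(\xi,x)]$. $\mathbb{1}\{B\}$ is the indicator. Lower/upper limits: $\liminf_{(\nu,y)\to(+\infty,x)}a^\nu(y):=\lim_{\delta\downarrow0}\lim_{N\to\infty}\inf\{a^\nu(y):\nu\ge N, d_{\mathbb{X}}(y,x)<\delta\}$; $\liminf_{(\nu,y,\zeta)\to(+\infty,x,\xi)}f^\nu(\zeta,y)$ is defined analogously with $d_{\mathbb{X}}(y,x)<\delta$ and $d_\Xi(\zeta,\xi)<\delta$; $\limsup_{(\nu,\zeta)\to(+\infty,\xi)}a^\nu(\zeta):=\lim_{\delta\downarrow0}\lim_{N\to\infty}\sup\{a^\nu(\zeta):\nu\ge N, d_\Xi(\zeta,\xi)<\delta\}$. Functions $h^\nu:\mathbb{X}\to\overline{\mathbb{R}}$ epi-converge to $h$ if for every $x$: for every $x^\nu\to x$, $h(x)\le\liminf_\nu h^\nu(x^\nu)$, and there exists $x^\nu\to x$ with $h^\nu(x^\nu)\to h(x)$. *)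

theory Defs
  imports "HOL-Probability.Probability"
begin

text \<open>Extended expectation E^mu[g] = int g_+ - int g_-, with the conventions
  +inf - a = +inf for all a, and b - (+inf) = -inf for finite b.\<close>
definition eexp :: "'a measure \<Rightarrow> ('a \<Rightarrow> ereal) \<Rightarrow> ereal" where
  "eexp M g =
    (let p = (\<integral>\<^sup>+ x. e2ennreal (max 0 (g x)) \<partial>M);
         n = (\<integral>\<^sup>+ x. e2ennreal (max 0 (- g x)) \<partial>M)
     in if p = \<infinity> then \<infinity> else enn2ereal p - enn2ereal n)"

definition weak_conv :: "(nat \<Rightarrow> 'a::metric_space measure) \<Rightarrow> 'a measure \<Rightarrow> bool" where
  "weak_conv Ps P \<longleftrightarrow>
     (\<forall>\<phi>::'a \<Rightarrow> real. continuous_on UNIV \<phi> \<and> bounded (range \<phi>) \<longrightarrow>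
        (\<lambda>\<nu>. integral\<^sup>L (Ps \<nu>) \<phi>) \<longlonglongrightarrow> integral\<^sup>L P \<phi>)"

text \<open>liminf_{(nu,y) -> (+inf,x)} a nu y
  = lim_{delta->0} lim_{N->inf} inf {a nu y : nu >= N, d(y,x) < delta};
  both limits are of monotone families, hence suprema.\<close>
definition liminf2 :: "(nat \<Rightarrow> 'x::metric_space \<Rightarrow> ereal) \<Rightarrow> 'x \<Rightarrow> ereal" where
  "liminf2 a x = (SUP \<delta>\<in>{0<..}. SUP N. INF \<nu>\<in>{N..}. INF y\<in>{y. dist y x < \<delta>}. a \<nu> y)"

definition liminf3 :: "(nat \<Rightarrow> 'x::metric_space \<Rightarrow> 'c::metric_space \<Rightarrow> ereal) \<Rightarrow> 'x \<Rightarrow> 'c \<Rightarrow> ereal" where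
  "liminf3 a x \<xi> = (SUP \<delta>\<in>{0<..}. SUP N. INF \<nu>\<in>{N..}.
      INF y\<in>{y. dist y x < \<delta>}. INF \<zeta>\<in>{\<zeta>. dist \<zeta> \<xi> < \<delta>}. a \<nu> y \<zeta>)"

definition limsup2 :: "(nat \<Rightarrow> 'c::metric_space \<Rightarrow> ereal) \<Rightarrow> 'c \<Rightarrow> ereal" where
  "limsup2 a \<xi> = (INF \<delta>\<in>{0<..}. INF N. SUP \<nu>\<in>{N..}. SUP \<zeta>\<in>{\<zeta>. dist \<zeta> \<xi> < \<delta>}. a \<nu> \<zeta>)"

definition epi_converges :: "(nat \<Rightarrow> 'x::metric_space \<Rightarrow> ereal) \<Rightarrow> ('x \<Rightarrow> ereal) \<Rightarrow> bool" where
  "epi_converges hs h \<longleftrightarrow>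
     (\<forall>x. (\<forall>xs. xs \<longlonglongrightarrow> x \<longrightarrow> h x \<le> liminf (\<lambda>\<nu>. hs \<nu> (xs \<nu>))) \<and>
          (\<exists>xs. xs \<longlonglongrightarrow> x \<and> (\<lambda>\<nu>. hs \<nu> (xs \<nu>)) \<longlonglongrightarrow> h x))"

end

theory Submission
  imports Defs
begin

text \<open>
  Lower bound along \<open>x\<^sup>\<nu> \<longrightarrow> x\<close>: truncating \<open>f\<^sup>\<nu>(., x\<^sup>\<nu>)\<close> from below at \<open>-K\<close> gives
  nonnegative functions \<open>u\<^sup>\<nu>\<close>, and a Fatou lemma for weakly converging measures gives
  \<open>\<integral> liminf\<^bsub>(\<nu>,\<zeta>) \<rightarrow> (\<infinity>,\<xi>)\<^esub> u\<^sup>\<nu>(\<zeta>) dP(\<xi>) \<le> liminf\<^bsub>\<nu>\<^esub> \<integral> u\<^sup>\<nu> dP\<^sup>\<nu>\<close>.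
  By (c) the integrand on the left dominates the truncation of \<open>f(., x)\<close>, and by (b) the
  part cut off by the truncation costs at most \<open>\<epsilon>\<close> once \<open>K\<close> is large. The limsup bound along
  the sequence of the hypothesis is symmetric: the same Fatou lemma is applied to
  \<open>K - min(f\<^sup>\<nu>(., x\<^sup>\<nu>), K)\<close>, using (ii) and (i).

  Fatou's lemma itself: let \<open>\<phi>\<^sub>n(\<zeta>)\<close> be the infimum of \<open>u\<^sup>\<nu>\<close> over \<open>\<nu> \<ge> n\<close> and the ball of
  radius \<open>1/(n+1)\<close> around \<open>\<zeta>\<close>. The inf-convolutions
  \<open>\<lambda>\<^sub>n(\<xi>) = inf\<^bsub>\<zeta>\<^esub> (min(\<phi>\<^sub>n(\<zeta>), n) + n d(\<xi>, \<zeta>))\<close> are bounded and Lipschitz, lie below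
  \<open>u\<^sup>\<nu>\<close> for \<open>\<nu> \<ge> n\<close>, and increase to the joint lower limit of \<open>u\<^sup>\<nu>\<close>. Weak convergence handles
  each \<open>\<lambda>\<^sub>n\<close>, and monotone convergence concludes.
\<close>

section \<open>Joint lower and upper limits\<close>

lemma less_liminf2D:
  assumes "c < liminf2 a x"
  obtains \<delta> N where "0 < \<delta>" "\<And>\<nu> y. N \<le> \<nu> \<Longrightarrow> dist y x < \<delta> \<Longrightarrow> c < a \<nu> y"
proof -
  from assms obtain \<delta> N where \<delta>: "0 < \<delta>"
    and less: "c < (INF \<nu>\<in>{N..}. INF y\<in>{y. dist y x < \<delta>}. a \<nu> y)"
    unfolding liminf2_def by (auto simp: less_SUP_iff)
  have "c < a \<nu> y" if "N \<le> \<nu>" and "dist y x < \<delta>" for \<nu> y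
    using less_INF_D[OF less_INF_D[OF less, of \<nu>], of y] that by simp
  with \<delta> show ?thesis by (rule that)
qed

lemma less_liminf3D:
  assumes "c < liminf3 a x \<xi>"
  obtains \<delta> N where "0 < \<delta>"
    "\<And>\<nu> y \<zeta>. N \<le> \<nu> \<Longrightarrow> dist y x < \<delta> \<Longrightarrow> dist \<zeta> \<xi> < \<delta> \<Longrightarrow> c < a \<nu> y \<zeta>"
proof -
  from assms obtain \<delta> N where \<delta>: "0 < \<delta>" and less:
    "c < (INF \<nu>\<in>{N..}. INF y\<in>{y. dist y x < \<delta>}. INF \<zeta>\<in>{\<zeta>. dist \<zeta> \<xi> < \<delta>}. a \<nu> y \<zeta>)"
    unfolding liminf3_def by (auto simp: less_SUP_iff)
  have "c < a \<nu> y \<zeta>" if "N \<le> \<nu>" and "dist y x < \<delta>" and "dist \<zeta> \<xi> < \<delta>" for \<nu> y \<zeta>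
    using less_INF_D[OF less_INF_D[OF less_INF_D[OF less, of \<nu>], of y], of \<zeta>] that by simp
  with \<delta> show ?thesis by (rule that)
qed

lemma limsup2_lessD:
  assumes "limsup2 a \<xi> < c"
  obtains \<delta> N where "0 < \<delta>" "\<And>\<nu> \<zeta>. N \<le> \<nu> \<Longrightarrow> dist \<zeta> \<xi> < \<delta> \<Longrightarrow> a \<nu> \<zeta> < c"
proof -
  from assms obtain \<delta> N where \<delta>: "0 < \<delta>"
    and less: "(SUP \<nu>\<in>{N..}. SUP \<zeta>\<in>{\<zeta>. dist \<zeta> \<xi> < \<delta>}. a \<nu> \<zeta>) < c"
    unfolding limsup2_def by (auto simp: INF_less_iff)
  have "a \<nu> \<zeta> < c" if "N \<le> \<nu>" and "dist \<zeta> \<xi> < \<delta>" for \<nu> \<zeta>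
    using SUP_lessD[OF SUP_lessD[OF less, of \<nu>], of \<zeta>] that by simp
  with \<delta> show ?thesis by (rule that)
qed

lemma liminf2_geI:
  assumes "\<And>t. t < c \<Longrightarrow> \<exists>\<delta>>0. \<exists>N. \<forall>\<nu>\<ge>N. \<forall>y. dist y x < \<delta> \<longrightarrow> t \<le> a \<nu> y"
  shows "c \<le> liminf2 a x"
proof (rule dense_le)
  fix t assume "t < c"
  then obtain \<delta> N where "0 < \<delta>" and rect: "\<forall>\<nu>\<ge>N. \<forall>y. dist y x < \<delta> \<longrightarrow> t \<le> a \<nu> y"
    using assms by blast
  from rect have "t \<le> (INF \<nu>\<in>{N..}. INF y\<in>{y. dist y x < \<delta>}. a \<nu> y)"
    by (auto intro!: INF_greatest)
  also have "\<dots> \<le> liminf2 a x"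
    unfolding liminf2_def using \<open>0 < \<delta>\<close> by (intro SUP_upper2[of \<delta>] SUP_upper) auto
  finally show "t \<le> liminf2 a x" .
qed

lemma liminf2_le_liminf_along:
  assumes "xs \<longlonglongrightarrow> x"
  shows "liminf2 a x \<le> liminf (\<lambda>\<nu>. a \<nu> (xs \<nu>))"
  unfolding le_Liminf_iff
proof (intro allI impI)
  fix c assume "c < liminf2 a x"
  then obtain \<delta> N where "0 < \<delta>" and rect: "\<And>\<nu> y. N \<le> \<nu> \<Longrightarrow> dist y x < \<delta> \<Longrightarrow> c < a \<nu> y"
    using less_liminf2D by blast
  have "eventually (\<lambda>\<nu>. dist (xs \<nu>) x < \<delta>) sequentially"
    using \<open>xs \<longlonglongrightarrow> x\<close> \<open>0 < \<delta>\<close> by (rule tendstoD)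
  moreover have "eventually (\<lambda>\<nu>. N \<le> \<nu>) sequentially" by (rule eventually_ge_at_top)
  ultimately show "eventually (\<lambda>\<nu>. c < a \<nu> (xs \<nu>)) sequentially"
    by eventually_elim (rule rect)
qed

lemma liminf3_le_liminf2_along:
  assumes "xs \<longlonglongrightarrow> x"
  shows "liminf3 a x \<xi> \<le> liminf2 (\<lambda>\<nu> \<zeta>. a \<nu> (xs \<nu>) \<zeta>) \<xi>"
proof (rule liminf2_geI)
  fix t assume "t < liminf3 a x \<xi>"
  then obtain \<delta> N where "0 < \<delta>"
    and rect: "\<And>\<nu> y \<zeta>. N \<le> \<nu> \<Longrightarrow> dist y x < \<delta> \<Longrightarrow> dist \<zeta> \<xi> < \<delta> \<Longrightarrow> t < a \<nu> y \<zeta>"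
    using less_liminf3D by blast
  obtain N' where N': "\<And>\<nu>. N' \<le> \<nu> \<Longrightarrow> dist (xs \<nu>) x < \<delta>"
    using metric_LIMSEQ_D[OF assms \<open>0 < \<delta>\<close>] by blast
  have "\<forall>\<nu>\<ge>max N N'. \<forall>\<zeta>. dist \<zeta> \<xi> < \<delta> \<longrightarrow> t \<le> a \<nu> (xs \<nu>) \<zeta>"
    using rect N' by (auto intro: less_imp_le)
  with \<open>0 < \<delta>\<close> show "\<exists>\<delta>>0. \<exists>N. \<forall>\<nu>\<ge>N. \<forall>\<zeta>. dist \<zeta> \<xi> < \<delta> \<longrightarrow> t \<le> a \<nu> (xs \<nu>) \<zeta>"
    by blast
qed

lemma liminf2_lower_truncation:
  "max (liminf2 g \<xi>) (- ereal K) + ereal K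
    \<le> liminf2 (\<lambda>\<nu> \<zeta>. max (g \<nu> \<zeta>) (- ereal K) + ereal K) \<xi>"
proof (rule liminf2_geI)
  fix t assume t: "t < max (liminf2 g \<xi>) (- ereal K) + ereal K"
  have trunc_nonneg: "0 \<le> max y (- ereal K) + ereal K" for y
    by (cases y) (auto simp: max_def)
  show "\<exists>\<delta>>0. \<exists>N. \<forall>\<nu>\<ge>N. \<forall>\<zeta>. dist \<zeta> \<xi> < \<delta> \<longrightarrow> t \<le> max (g \<nu> \<zeta>) (- ereal K) + ereal K"
  proof (cases "t \<le> 0")
    case True
    then show ?thesis using trunc_nonneg by (meson order_trans zero_less_one)
  next
    case False
    with t obtain s where ts: "t = ereal s" and "0 < s"
      by (cases t) auto
    with t have "ereal (s - K) < liminf2 g \<xi>"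
      by (cases "liminf2 g \<xi>") (auto simp: max_def split: if_splits)
    then obtain \<delta> N where "0 < \<delta>" and rect: "\<And>\<nu> \<zeta>. N \<le> \<nu> \<Longrightarrow> dist \<zeta> \<xi> < \<delta> \<Longrightarrow> ereal (s - K) < g \<nu> \<zeta>"
      using less_liminf2D by blast
    have "t \<le> max (g \<nu> \<zeta>) (- ereal K) + ereal K" if "N \<le> \<nu>" and "dist \<zeta> \<xi> < \<delta>" for \<nu> \<zeta>
      using rect[OF that] unfolding ts by (cases "g \<nu> \<zeta>") (auto simp: max_def)
    with \<open>0 < \<delta>\<close> show ?thesis by blast
  qed
qed

lemma liminf2_upper_truncation:
  "ereal K - min (limsup2 g \<xi>) (ereal K)
    \<le> liminf2 (\<lambda>\<nu> \<zeta>. ereal K - min (g \<nu> \<zeta>) (ereal K)) \<xi>"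
proof (rule liminf2_geI)
  fix t assume t: "t < ereal K - min (limsup2 g \<xi>) (ereal K)"
  have trunc_nonneg: "0 \<le> ereal K - min y (ereal K)" for y
    by (cases y) (auto simp: min_def)
  show "\<exists>\<delta>>0. \<exists>N. \<forall>\<nu>\<ge>N. \<forall>\<zeta>. dist \<zeta> \<xi> < \<delta> \<longrightarrow> t \<le> ereal K - min (g \<nu> \<zeta>) (ereal K)"
  proof (cases "t \<le> 0")
    case True
    then show ?thesis using trunc_nonneg by (meson order_trans zero_less_one)
  next
    case False
    with t obtain s where ts: "t = ereal s" and "0 < s"
      by (cases t) auto
    with t have "limsup2 g \<xi> < ereal (K - s)"
      by (cases "limsup2 g \<xi>") (auto simp: min_def split: if_splits)
    then obtain \<delta> N where "0 < \<delta>" and rect: "\<And>\<nu> \<zeta>. N \<le> \<nu> \<Longrightarrow> dist \<zeta> \<xi> < \<delta> \<Longrightarrow> g \<nu> \<zeta> < ereal (K - s)"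
      using limsup2_lessD by blast
    have "t \<le> ereal K - min (g \<nu> \<zeta>) (ereal K)" if "N \<le> \<nu>" and "dist \<zeta> \<xi> < \<delta>" for \<nu> \<zeta>
      using rect[OF that] unfolding ts by (cases "g \<nu> \<zeta>") (auto simp: min_def)
    with \<open>0 < \<delta>\<close> show ?thesis by blast
  qed
qed

section \<open>Lipschitz approximation from below\<close>

definition lipschitz_envelope :: "('a::metric_space \<Rightarrow> real) \<Rightarrow> real \<Rightarrow> 'a \<Rightarrow> real" where
  "lipschitz_envelope g L x = (INF y. g y + L * dist x y)"

lemma lipschitz_envelope_greatest:
  "(\<And>y. c \<le> g y + L * dist x y) \<Longrightarrow> c \<le> lipschitz_envelope g L x"
  unfolding lipschitz_envelope_def by (rule cINF_greatest) auto

context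
  fixes g :: "'a::metric_space \<Rightarrow> real" and c L :: real
  assumes g_ge: "\<And>y. c \<le> g y" and L_nonneg: "0 \<le> L"
begin

lemma lipschitz_envelope_bdd_below: "bdd_below (range (\<lambda>y. g y + L * dist x y))"
  using g_ge L_nonneg by (intro bdd_belowI[of _ c]) (auto intro: add_increasing2)

lemma lipschitz_envelope_le: "lipschitz_envelope g L x \<le> g x"
  using cINF_lower[OF lipschitz_envelope_bdd_below, of x x] by (simp add: lipschitz_envelope_def)

lemma lipschitz_envelope_ge_lower_bound: "c \<le> lipschitz_envelope g L x"
  using g_ge L_nonneg by (intro lipschitz_envelope_greatest add_increasing2) auto

lemma lipschitz_envelope_lipschitz: "L-lipschitz_on UNIV (lipschitz_envelope g L)"
proof (rule lipschitz_onI)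
  have shift: "lipschitz_envelope g L x \<le> lipschitz_envelope g L x' + L * dist x x'" for x x'
  proof -
    have "lipschitz_envelope g L x - L * dist x x' \<le> g y + L * dist x' y" for y
    proof -
      have "lipschitz_envelope g L x \<le> g y + L * dist x y"
        unfolding lipschitz_envelope_def by (rule cINF_lower[OF lipschitz_envelope_bdd_below]) simp
      also have "\<dots> \<le> g y + L * (dist x x' + dist x' y)"
        using L_nonneg by (intro add_left_mono mult_left_mono dist_triangle)
      finally show ?thesis by (simp add: algebra_simps)
    qed
    then have "lipschitz_envelope g L x - L * dist x x' \<le> lipschitz_envelope g L x'"
      unfolding lipschitz_envelope_def[of g L x'] by (intro cINF_greatest) auto
    then show ?thesis by simp
  qed
  show "dist (lipschitz_envelope g L x) (lipschitz_envelope g L y) \<le> L * dist x y" for x y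
    using shift[of x y] shift[of y x] unfolding dist_real_def abs_le_iff by (auto simp: dist_commute)
qed (use L_nonneg in simp)

lemma continuous_on_lipschitz_envelope: "continuous_on UNIV (lipschitz_envelope g L)"
  using lipschitz_envelope_lipschitz by (rule lipschitz_on_continuous_on)

lemma lipschitz_envelope_mono:
  assumes "\<And>y. g y \<le> g' y" and "L \<le> L'"
  shows "lipschitz_envelope g L x \<le> lipschitz_envelope g' L' x"
  unfolding lipschitz_envelope_def[of g' L']
proof (rule cINF_greatest)
  fix y
  have "lipschitz_envelope g L x \<le> g y + L * dist x y"
    unfolding lipschitz_envelope_def by (rule cINF_lower[OF lipschitz_envelope_bdd_below]) simp
  also have "\<dots> \<le> g' y + L' * dist x y"
    using assms by (intro add_mono mult_right_mono) auto
  finally show "lipschitz_envelope g L x \<le> g' y + L' * dist x y" .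
qed simp

end

definition tail_ball_inf :: "(nat \<Rightarrow> 'a::metric_space \<Rightarrow> ereal) \<Rightarrow> nat \<Rightarrow> 'a \<Rightarrow> ereal" where
  "tail_ball_inf u m \<xi> = (INF \<nu>\<in>{m..}. INF \<zeta>\<in>ball \<xi> (1 / Suc m). u \<nu> \<zeta>)"

lemma tail_ball_inf_le: "m \<le> \<nu> \<Longrightarrow> dist \<xi> \<zeta> < 1 / Suc m \<Longrightarrow> tail_ball_inf u m \<xi> \<le> u \<nu> \<zeta>"
  unfolding tail_ball_inf_def by (intro INF_lower2[of \<nu>] INF_lower) auto

lemma tail_ball_inf_mono:
  assumes "m \<le> n" and "dist \<xi> \<zeta> + 1 / Suc n \<le> 1 / Suc m"
  shows "tail_ball_inf u m \<xi> \<le> tail_ball_inf u n \<zeta>"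
  unfolding tail_ball_inf_def[of u n]
proof (intro INF_greatest)
  fix \<nu> \<zeta>' assume "\<nu> \<in> {n..}" and "\<zeta>' \<in> ball \<zeta> (1 / Suc n)"
  moreover have "dist \<xi> \<zeta>' \<le> dist \<xi> \<zeta> + dist \<zeta> \<zeta>'" by (rule dist_triangle)
  ultimately show "tail_ball_inf u m \<xi> \<le> u \<nu> \<zeta>'"
    using assms by (intro tail_ball_inf_le) auto
qed

lemma tail_ball_inf_nonneg: "(\<And>\<nu> \<zeta>. 0 \<le> u \<nu> \<zeta>) \<Longrightarrow> 0 \<le> tail_ball_inf u m \<xi>"
  unfolding tail_ball_inf_def by (auto intro!: INF_greatest)

lemma less_liminf2_imp_tail_ball_inf:
  assumes "c < liminf2 u \<xi>"
  obtains m where "c \<le> tail_ball_inf u m \<xi>"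
proof -
  obtain \<delta> N where "0 < \<delta>" and rect: "\<And>\<nu> \<zeta>. N \<le> \<nu> \<Longrightarrow> dist \<zeta> \<xi> < \<delta> \<Longrightarrow> c < u \<nu> \<zeta>"
    using less_liminf2D[OF assms] by blast
  obtain k where k: "inverse (real (Suc k)) < \<delta>"
    using reals_Archimedean[OF \<open>0 < \<delta>\<close>] by blast
  define m where "m = max N k"
  have m: "1 / real (Suc m) \<le> inverse (real (Suc k))"
    unfolding m_def by (simp add: inverse_eq_divide frac_le)
  have "c \<le> u \<nu> \<zeta>" if "\<nu> \<in> {m..}" and "\<zeta> \<in> ball \<xi> (1 / Suc m)" for \<nu> \<zeta>
  proof (rule less_imp_le, rule rect)
    show "N \<le> \<nu>" using that(1) by (simp add: m_def)
    show "dist \<zeta> \<xi> < \<delta>" using that(2) m k by (simp add: dist_commute)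
  qed
  then have "c \<le> tail_ball_inf u m \<xi>"
    unfolding tail_ball_inf_def by (intro INF_greatest)
  then show ?thesis by (rule that)
qed

definition capped_tail_inf :: "(nat \<Rightarrow> 'a::metric_space \<Rightarrow> ereal) \<Rightarrow> nat \<Rightarrow> 'a \<Rightarrow> real" where
  "capped_tail_inf u n \<zeta> = real_of_ereal (min (tail_ball_inf u n \<zeta>) (ereal (real n)))"

definition lipschitz_tail_approx :: "(nat \<Rightarrow> 'a::metric_space \<Rightarrow> ereal) \<Rightarrow> nat \<Rightarrow> 'a \<Rightarrow> real" where
  "lipschitz_tail_approx u n = lipschitz_envelope (capped_tail_inf u n) (real n)"

context
  fixes u :: "nat \<Rightarrow> 'a::metric_space \<Rightarrow> ereal"
  assumes u_nonneg: "\<And>\<nu> \<zeta>. 0 \<le> u \<nu> \<zeta>"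
begin

lemma ereal_capped_tail_inf: "ereal (capped_tail_inf u n \<zeta>) = min (tail_ball_inf u n \<zeta>) (real n)"
  using tail_ball_inf_nonneg[of u n \<zeta>, OF u_nonneg] unfolding capped_tail_inf_def
  by (cases "tail_ball_inf u n \<zeta>") (auto simp: min_def)

lemma capped_tail_inf_nonneg: "0 \<le> capped_tail_inf u n \<zeta>"
proof -
  have "(0::ereal) \<le> ereal (capped_tail_inf u n \<zeta>)"
    unfolding ereal_capped_tail_inf using tail_ball_inf_nonneg[of u n \<zeta>, OF u_nonneg] by simp
  then show ?thesis by simp
qed

lemma capped_tail_inf_le: "capped_tail_inf u n \<zeta> \<le> real n"
  using ereal_capped_tail_inf[of n \<zeta>] by (metis ereal_less_eq(3) min.cobounded2)

lemma capped_tail_inf_mono: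
  assumes "m \<le> n"
  shows "capped_tail_inf u m \<zeta> \<le> capped_tail_inf u n \<zeta>"
proof -
  have "tail_ball_inf u m \<zeta> \<le> tail_ball_inf u n \<zeta>"
    using assms by (intro tail_ball_inf_mono) (auto simp: frac_le)
  then have "ereal (capped_tail_inf u m \<zeta>) \<le> ereal (capped_tail_inf u n \<zeta>)"
    unfolding ereal_capped_tail_inf using assms by (intro min.mono) auto
  then show ?thesis by simp
qed

lemma lipschitz_tail_approx_nonneg: "0 \<le> lipschitz_tail_approx u n \<xi>"
  unfolding lipschitz_tail_approx_def
  by (rule lipschitz_envelope_ge_lower_bound) (auto intro: capped_tail_inf_nonneg)

lemma lipschitz_tail_approx_le_capped: "lipschitz_tail_approx u n \<xi> \<le> capped_tail_inf u n \<xi>"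
  unfolding lipschitz_tail_approx_def
  by (rule lipschitz_envelope_le[where c=0]) (auto intro: capped_tail_inf_nonneg)

lemma lipschitz_tail_approx_le: "lipschitz_tail_approx u n \<xi> \<le> real n"
  using lipschitz_tail_approx_le_capped capped_tail_inf_le by (rule order_trans)

lemma lipschitz_tail_approx_le_u:
  assumes "n \<le> \<nu>"
  shows "ereal (lipschitz_tail_approx u n \<zeta>) \<le> u \<nu> \<zeta>"
proof -
  have "ereal (lipschitz_tail_approx u n \<zeta>) \<le> ereal (capped_tail_inf u n \<zeta>)"
    using lipschitz_tail_approx_le_capped by simp
  also have "\<dots> \<le> tail_ball_inf u n \<zeta>"
    unfolding ereal_capped_tail_inf by simp
  also have "\<dots> \<le> u \<nu> \<zeta>"
    using assms by (intro tail_ball_inf_le) auto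
  finally show ?thesis .
qed

lemma continuous_on_lipschitz_tail_approx: "continuous_on UNIV (lipschitz_tail_approx u n)"
  unfolding lipschitz_tail_approx_def
  by (rule continuous_on_lipschitz_envelope[where c=0]) (auto intro: capped_tail_inf_nonneg)

lemma lipschitz_tail_approx_mono: "m \<le> n \<Longrightarrow> lipschitz_tail_approx u m \<xi> \<le> lipschitz_tail_approx u n \<xi>"
  unfolding lipschitz_tail_approx_def
  by (rule lipschitz_envelope_mono[where c=0]) (auto intro: capped_tail_inf_nonneg capped_tail_inf_mono)

lemma lipschitz_tail_approx_exceeds:
  assumes "ereal c \<le> tail_ball_inf u m \<xi>"
  obtains n where "c \<le> lipschitz_tail_approx u n \<xi>"
proof -
  txt \<open>Points within \<open>1 / (2 * Suc m)\<close> of \<open>\<xi>\<close> see the tail infimum at \<open>\<xi>\<close>; for the others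
    the penalty \<open>n * dist\<close> already exceeds \<open>k \<ge> c\<close>.\<close>
  define k where "k = nat \<lceil>c\<rceil> + 1"
  define n where "n = 2 * Suc m * k"
  have c_le_k: "c \<le> real k" unfolding k_def by linarith
  have "c \<le> lipschitz_tail_approx u n \<xi>"
    unfolding lipschitz_tail_approx_def
  proof (rule lipschitz_envelope_greatest)
    fix \<zeta>
    show "c \<le> capped_tail_inf u n \<zeta> + real n * dist \<xi> \<zeta>"
    proof (cases "dist \<xi> \<zeta> < 1 / (2 * Suc m)")
      case True
      have "2 * Suc m \<le> Suc n" unfolding n_def k_def by simp
      then have "1 / Suc n \<le> 1 / (2 * Suc m)"
        by (intro divide_left_mono) (simp_all del: of_nat_Suc add: of_nat_mono[where 'a=real, simplified])
      with True have "dist \<xi> \<zeta> + 1 / Suc n \<le> 1 / (2 * Suc m) + 1 / (2 * Suc m)"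
        by linarith
      also have "\<dots> = 1 / Suc m" by (simp add: field_simps)
      finally have "tail_ball_inf u m \<xi> \<le> tail_ball_inf u n \<zeta>"
        by (intro tail_ball_inf_mono) (simp add: n_def k_def)
      moreover have "c \<le> real n" using c_le_k unfolding n_def by (simp add: order_trans)
      ultimately have "ereal c \<le> ereal (capped_tail_inf u n \<zeta>)"
        unfolding ereal_capped_tail_inf using assms by auto
      then show ?thesis by (simp add: add_increasing2)
    next
      case False
      have "real k = real n * (1 / (2 * Suc m))" unfolding n_def by (simp add: field_simps)
      also have "\<dots> \<le> real n * dist \<xi> \<zeta>" using False by (intro mult_left_mono) auto
      finally show ?thesis using c_le_k capped_tail_inf_nonneg[of n \<zeta>] by linarith
    qed
  qed
  then show ?thesis by (rule that)
qed

lemma liminf2_nonneg: "0 \<le> liminf2 u \<xi>"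
proof (rule liminf2_geI)
  fix t :: ereal assume "t < 0"
  then have "t \<le> u \<nu> \<zeta>" for \<nu> \<zeta> using u_nonneg[of \<nu> \<zeta>] by simp
  then show "\<exists>\<delta>>0. \<exists>N. \<forall>\<nu>\<ge>N. \<forall>\<zeta>. dist \<zeta> \<xi> < \<delta> \<longrightarrow> t \<le> u \<nu> \<zeta>"
    by (intro exI[of _ 1]) auto
qed

lemma liminf2_le_SUP_lipschitz_tail_approx:
  "e2ennreal (liminf2 u \<xi>) \<le> (SUP n. ennreal (lipschitz_tail_approx u n \<xi>))"
proof (rule dense_le)
  fix t assume t: "t < e2ennreal (liminf2 u \<xi>)"
  then obtain c where "0 \<le> c" and tc: "t = ennreal c"
    by (cases t rule: ennreal_cases) auto
  with t have "ereal c < liminf2 u \<xi>"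
    by (metis liminf2_nonneg enn2ereal_e2ennreal enn2ereal_ennreal less_ennreal.rep_eq)
  then obtain m where "ereal c \<le> tail_ball_inf u m \<xi>"
    by (rule less_liminf2_imp_tail_ball_inf)
  then obtain n where "c \<le> lipschitz_tail_approx u n \<xi>"
    by (rule lipschitz_tail_approx_exceeds)
  then show "t \<le> (SUP n. ennreal (lipschitz_tail_approx u n \<xi>))"
    unfolding tc by (intro SUP_upper2[of n] ennreal_leI) auto
qed

end

section \<open>Fatou's lemma under weak convergence\<close>

lemma nn_integral_bounded_continuous:
  fixes g :: "'a::metric_space \<Rightarrow> real"
  assumes "prob_space M" and "sets M = sets borel" and "continuous_on UNIV g"
    and "\<And>x. 0 \<le> g x" and "\<And>x. g x \<le> B"
  shows "(\<integral>\<^sup>+x. ennreal (g x) \<partial>M) = ennreal (\<integral>x. g x \<partial>M)"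
proof (rule nn_integral_eq_integral)
  interpret prob_space M by fact
  have "g \<in> borel_measurable M"
    using assms(2,3) by (simp add: measurable_cong_sets[OF assms(2) refl] borel_measurable_continuous_onI)
  then show "integrable M g"
    using assms(4,5) by (intro integrable_const_bound[where B=B]) auto
qed (use assms(4) in auto)

lemma nn_integral_liminf2_le_liminf:
  fixes P :: "'a::metric_space measure" and Ps :: "nat \<Rightarrow> 'a measure"
  assumes P: "prob_space P" "sets P = sets borel"
    and Ps: "\<And>\<nu>. prob_space (Ps \<nu>)" "\<And>\<nu>. sets (Ps \<nu>) = sets borel"
    and weak: "weak_conv Ps P" and u_nonneg: "\<And>\<nu> \<zeta>. 0 \<le> u \<nu> \<zeta>"
  shows "(\<integral>\<^sup>+\<xi>. e2ennreal (liminf2 u \<xi>) \<partial>P) \<le> liminf (\<lambda>\<nu>. \<integral>\<^sup>+\<zeta>. e2ennreal (u \<nu> \<zeta>) \<partial>Ps \<nu>)"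
proof -
  let ?a = "lipschitz_tail_approx u"
  note a_cont = continuous_on_lipschitz_tail_approx[where u=u, OF u_nonneg]
  note a_bounds = lipschitz_tail_approx_nonneg[where u=u, OF u_nonneg]
    lipschitz_tail_approx_le[where u=u, OF u_nonneg]
  have a_le_liminf: "(\<integral>\<^sup>+\<xi>. ennreal (?a n \<xi>) \<partial>P) \<le> liminf (\<lambda>\<nu>. \<integral>\<^sup>+\<zeta>. e2ennreal (u \<nu> \<zeta>) \<partial>Ps \<nu>)" for n
  proof -
    have "bounded (range (?a n))"
      using a_bounds by (intro boundedI[of _ "real n"]) (auto simp: abs_le_iff intro: order_trans[of _ 0])
    with weak a_cont have "(\<lambda>\<nu>. ennreal (\<integral>\<xi>. ?a n \<xi> \<partial>Ps \<nu>)) \<longlonglongrightarrow> ennreal (\<integral>\<xi>. ?a n \<xi> \<partial>P)"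
      unfolding weak_conv_def by (intro tendsto_ennrealI) blast
    then have "(\<integral>\<^sup>+\<xi>. ennreal (?a n \<xi>) \<partial>P) = liminf (\<lambda>\<nu>. \<integral>\<^sup>+\<xi>. ennreal (?a n \<xi>) \<partial>Ps \<nu>)"
      using nn_integral_bounded_continuous[OF _ _ a_cont a_bounds] P Ps
      by (simp add: lim_imp_Liminf)
    also have "\<dots> \<le> liminf (\<lambda>\<nu>. \<integral>\<^sup>+\<zeta>. e2ennreal (u \<nu> \<zeta>) \<partial>Ps \<nu>)"
    proof (intro Liminf_mono eventually_mono[OF eventually_ge_at_top[of n]] nn_integral_mono)
      fix \<nu> \<zeta> assume "n \<le> \<nu>"
      then show "ennreal (?a n \<zeta>) \<le> e2ennreal (u \<nu> \<zeta>)"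
        using e2ennreal_mono[OF lipschitz_tail_approx_le_u[where u=u, OF u_nonneg]] by simp
    qed
    finally show ?thesis .
  qed
  have "incseq (\<lambda>n \<xi>. ennreal (?a n \<xi>))"
    by (auto simp: incseq_def le_fun_def
        intro!: ennreal_leI lipschitz_tail_approx_mono[where u=u, OF u_nonneg])
  moreover have "(\<lambda>\<xi>. ennreal (?a n \<xi>)) \<in> borel_measurable P" for n
    using borel_measurable_continuous_onI[OF a_cont]
    by (simp add: measurable_cong_sets[OF P(2) refl] measurable_compose[OF _ measurable_ennreal])
  ultimately have monotone_convergence:
    "(\<integral>\<^sup>+\<xi>. (SUP n. ennreal (?a n \<xi>)) \<partial>P) = (SUP n. \<integral>\<^sup>+\<xi>. ennreal (?a n \<xi>) \<partial>P)"
    by (rule nn_integral_monotone_convergence_SUP)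
  have "(\<integral>\<^sup>+\<xi>. e2ennreal (liminf2 u \<xi>) \<partial>P) \<le> (\<integral>\<^sup>+\<xi>. (SUP n. ennreal (?a n \<xi>)) \<partial>P)"
    by (intro nn_integral_mono liminf2_le_SUP_lipschitz_tail_approx[where u=u, OF u_nonneg])
  also have "\<dots> \<le> liminf (\<lambda>\<nu>. \<integral>\<^sup>+\<zeta>. e2ennreal (u \<nu> \<zeta>) \<partial>Ps \<nu>)"
    unfolding monotone_convergence by (intro SUP_least a_le_liminf)
  finally show ?thesis .
qed

lemma enn2ereal_nn_integral_liminf2_le_liminf:
  fixes P :: "'a::metric_space measure" and Ps :: "nat \<Rightarrow> 'a measure"
  assumes P: "prob_space P" "sets P = sets borel"
    and Ps: "\<And>\<nu>. prob_space (Ps \<nu>)" "\<And>\<nu>. sets (Ps \<nu>) = sets borel"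
    and weak: "weak_conv Ps P" and u_nonneg: "\<And>\<nu> \<zeta>. 0 \<le> u \<nu> \<zeta>"
  shows "enn2ereal (\<integral>\<^sup>+\<xi>. e2ennreal (liminf2 u \<xi>) \<partial>P)
    \<le> liminf (\<lambda>\<nu>. enn2ereal (\<integral>\<^sup>+\<zeta>. e2ennreal (u \<nu> \<zeta>) \<partial>Ps \<nu>))"
proof -
  have "mono enn2ereal" by (rule monoI) (simp add: less_eq_ennreal.rep_eq)
  then have "liminf (\<lambda>\<nu>. enn2ereal (\<integral>\<^sup>+\<zeta>. e2ennreal (u \<nu> \<zeta>) \<partial>Ps \<nu>))
      = enn2ereal (liminf (\<lambda>\<nu>. \<integral>\<^sup>+\<zeta>. e2ennreal (u \<nu> \<zeta>) \<partial>Ps \<nu>))"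
    by (intro Liminf_compose_continuous_mono continuous_on_enn2ereal)
      (simp_all add: trivial_limit_sequentially)
  with nn_integral_liminf2_le_liminf[OF assms] show ?thesis
    by (simp add: less_eq_ennreal.rep_eq)
qed

section \<open>Truncations of the extended expectation\<close>

lemma lower_truncation_parts:
  fixes x :: ereal assumes K: "0 \<le> K"
  shows "e2ennreal (max x (- ereal K) + ereal K) + e2ennreal (min (max 0 (- x)) (ereal K))
           = e2ennreal (max 0 x) + ennreal K"
    and "e2ennreal (min (max 0 (- x)) (ereal K)) \<le> ennreal K"
    and "e2ennreal (min (max 0 (- x)) (ereal K)) \<le> e2ennreal (max 0 (- x))"
    and "e2ennreal (max 0 (- x)) \<le> e2ennreal (min (max 0 (- x)) (ereal K))
           + e2ennreal (max 0 (- (if x \<le> - ereal K then x else 0)))"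
  using K by (cases x; cases "x \<le> - ereal K"; cases "x \<le> 0";
      simp add: max_def min_def ennreal_plus[symmetric] del: ennreal_plus; intro ennreal_leI)+

lemma upper_truncation_parts:
  fixes x :: ereal assumes K: "0 \<le> K"
  shows "e2ennreal (min (max 0 x) (ereal K)) + e2ennreal (ereal K - min (max 0 x) (ereal K)) = ennreal K"
    and "e2ennreal (ereal K - min x (ereal K))
           = e2ennreal (ereal K - min (max 0 x) (ereal K)) + e2ennreal (max 0 (- x))"
    and "e2ennreal (min (max 0 x) (ereal K)) \<le> e2ennreal (max 0 x)"
    and "e2ennreal (max 0 x) \<le> e2ennreal (min (max 0 x) (ereal K))
           + e2ennreal (max 0 (if ereal K \<le> x then x else 0))"
  using K by (cases x; cases "x \<le> ereal K"; cases "x \<le> 0";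
      simp add: max_def min_def ennreal_plus[symmetric] del: ennreal_plus; intro ennreal_leI)+

lemma eexp_eq_parts:
  "eexp M h = (if (\<integral>\<^sup>+\<xi>. e2ennreal (max 0 (h \<xi>)) \<partial>M) = \<infinity> then \<infinity>
     else enn2ereal (\<integral>\<^sup>+\<xi>. e2ennreal (max 0 (h \<xi>)) \<partial>M) - enn2ereal (\<integral>\<^sup>+\<xi>. e2ennreal (max 0 (- h \<xi>)) \<partial>M))"
  unfolding eexp_def Let_def by simp

context
  fixes M :: "'a measure" and h :: "'a \<Rightarrow> ereal" and K :: real
  assumes M: "prob_space M" and h: "h \<in> borel_measurable M" and K: "0 \<le> K"
begin

lemma eexp_lower_truncation:
  defines "U \<equiv> \<integral>\<^sup>+\<xi>. e2ennreal (max (h \<xi>) (- ereal K) + ereal K) \<partial>M"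
  shows "eexp M h \<le> enn2ereal U - ereal K"
    and "enn2ereal U - ereal K + eexp M (\<lambda>\<xi>. if h \<xi> \<le> - ereal K then h \<xi> else 0) \<le> eexp M h"
proof -
  define A where "A = (\<integral>\<^sup>+\<xi>. e2ennreal (max 0 (h \<xi>)) \<partial>M)"
  define B where "B = (\<integral>\<^sup>+\<xi>. e2ennreal (max 0 (- h \<xi>)) \<partial>M)"
  define C where "C = (\<integral>\<^sup>+\<xi>. e2ennreal (min (max 0 (- h \<xi>)) (ereal K)) \<partial>M)"
  define D where "D = (\<integral>\<^sup>+\<xi>. e2ennreal (max 0 (- (if h \<xi> \<le> - ereal K then h \<xi> else 0))) \<partial>M)"
  have "U + C = (\<integral>\<^sup>+\<xi>. e2ennreal (max 0 (h \<xi>)) + ennreal K \<partial>M)"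
    unfolding U_def C_def lower_truncation_parts(1)[OF K, symmetric]
    by (rule nn_integral_add[symmetric]) (use h in measurable)
  also have "\<dots> = A + ennreal K"
    unfolding A_def using h by (subst nn_integral_add) (auto simp: prob_space.emeasure_space_1[OF M])
  finally have UC: "U + C = A + ennreal K" .
  have "C \<le> (\<integral>\<^sup>+\<xi>. ennreal K \<partial>M)"
    unfolding C_def by (intro nn_integral_mono lower_truncation_parts(2)[OF K])
  then have CK: "C \<le> ennreal K" by (simp add: prob_space.emeasure_space_1[OF M])
  have CB: "C \<le> B"
    unfolding C_def B_def by (intro nn_integral_mono lower_truncation_parts(3)[OF K])
  have "B \<le> (\<integral>\<^sup>+\<xi>. e2ennreal (min (max 0 (- h \<xi>)) (ereal K))
      + e2ennreal (max 0 (- (if h \<xi> \<le> - ereal K then h \<xi> else 0))) \<partial>M)"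
    unfolding B_def by (intro nn_integral_mono lower_truncation_parts(4)[OF K])
  also have "\<dots> = C + D"
    unfolding C_def D_def by (rule nn_integral_add) (use h in measurable)
  finally have BCD: "B \<le> C + D" .
  have "max 0 (if h \<xi> \<le> - ereal K then h \<xi> else 0) = 0" for \<xi>
    using K by (cases "h \<xi>") (auto simp: max_def)
  then have eexp_trunc: "eexp M (\<lambda>\<xi>. if h \<xi> \<le> - ereal K then h \<xi> else 0) = - enn2ereal D"
    unfolding eexp_eq_parts D_def by (simp add: zero_ennreal.rep_eq)
  show "eexp M h \<le> enn2ereal U - ereal K"
    unfolding eexp_eq_parts A_def[symmetric] B_def[symmetric] using UC CK CB K
    by (cases A rule: ennreal_cases; cases B rule: ennreal_cases; cases C rule: ennreal_cases;
        cases U rule: ennreal_cases) (simp_all add: top_unique ennreal_plus[symmetric] del: ennreal_plus)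
  have "enn2ereal U - ereal K - enn2ereal D \<le> eexp M h"
    unfolding eexp_eq_parts A_def[symmetric] B_def[symmetric] using UC CK BCD K
    by (cases A rule: ennreal_cases; cases B rule: ennreal_cases; cases C rule: ennreal_cases;
        cases U rule: ennreal_cases; cases D rule: ennreal_cases)
      (simp_all add: top_unique ennreal_plus[symmetric] del: ennreal_plus)
  then show "enn2ereal U - ereal K + eexp M (\<lambda>\<xi>. if h \<xi> \<le> - ereal K then h \<xi> else 0) \<le> eexp M h"
    unfolding eexp_trunc by (simp add: minus_ereal_def)
qed

lemma eexp_upper_truncation:
  defines "W \<equiv> \<integral>\<^sup>+\<xi>. e2ennreal (ereal K - min (h \<xi>) (ereal K)) \<partial>M"
  shows "ereal K - enn2ereal W \<le> eexp M h"
    and "eexp M h \<le> ereal K - enn2ereal W + eexp M (\<lambda>\<xi>. if ereal K \<le> h \<xi> then h \<xi> else 0)"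
proof -
  define A where "A = (\<integral>\<^sup>+\<xi>. e2ennreal (max 0 (h \<xi>)) \<partial>M)"
  define B where "B = (\<integral>\<^sup>+\<xi>. e2ennreal (max 0 (- h \<xi>)) \<partial>M)"
  define E where "E = (\<integral>\<^sup>+\<xi>. e2ennreal (min (max 0 (h \<xi>)) (ereal K)) \<partial>M)"
  define Q where "Q = (\<integral>\<^sup>+\<xi>. e2ennreal (ereal K - min (max 0 (h \<xi>)) (ereal K)) \<partial>M)"
  define R where "R = (\<integral>\<^sup>+\<xi>. e2ennreal (max 0 (if ereal K \<le> h \<xi> then h \<xi> else 0)) \<partial>M)"
  have "E + Q = (\<integral>\<^sup>+\<xi>. e2ennreal (min (max 0 (h \<xi>)) (ereal K))
      + e2ennreal (ereal K - min (max 0 (h \<xi>)) (ereal K)) \<partial>M)"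
    unfolding E_def Q_def by (rule nn_integral_add[symmetric]) (use h in measurable)
  also have "\<dots> = (\<integral>\<^sup>+\<xi>. ennreal K \<partial>M)"
    by (simp only: upper_truncation_parts(1)[OF K])
  also have "\<dots> = ennreal K"
    by (simp add: prob_space.emeasure_space_1[OF M])
  finally have EQ: "E + Q = ennreal K" .
  have "W = (\<integral>\<^sup>+\<xi>. e2ennreal (ereal K - min (max 0 (h \<xi>)) (ereal K)) + e2ennreal (max 0 (- h \<xi>)) \<partial>M)"
    unfolding W_def by (intro nn_integral_cong upper_truncation_parts(2)[OF K])
  also have "\<dots> = Q + B"
    unfolding Q_def B_def by (rule nn_integral_add) (use h in measurable)
  finally have WQB: "W = Q + B" .
  have EA: "E \<le> A"
    unfolding E_def A_def by (intro nn_integral_mono upper_truncation_parts(3)[OF K])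
  have "A \<le> (\<integral>\<^sup>+\<xi>. e2ennreal (min (max 0 (h \<xi>)) (ereal K))
      + e2ennreal (max 0 (if ereal K \<le> h \<xi> then h \<xi> else 0)) \<partial>M)"
    unfolding A_def by (intro nn_integral_mono upper_truncation_parts(4)[OF K])
  also have "\<dots> = E + R"
    unfolding E_def R_def by (rule nn_integral_add) (use h in measurable)
  finally have AER: "A \<le> E + R" .
  have "max 0 (- (if ereal K \<le> h \<xi> then h \<xi> else 0)) = 0" for \<xi>
    using K by (cases "h \<xi>") (auto simp: max_def)
  then have eexp_trunc: "eexp M (\<lambda>\<xi>. if ereal K \<le> h \<xi> then h \<xi> else 0) = (if R = \<infinity> then \<infinity> else enn2ereal R)"
    unfolding eexp_eq_parts R_def by (simp add: zero_ennreal.rep_eq)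
  show "ereal K - enn2ereal W \<le> eexp M h"
    unfolding eexp_eq_parts A_def[symmetric] B_def[symmetric] using EQ WQB EA K
    by (cases A rule: ennreal_cases; cases B rule: ennreal_cases; cases E rule: ennreal_cases;
        cases Q rule: ennreal_cases) (simp_all add: top_unique ennreal_plus[symmetric] del: ennreal_plus)
  have "eexp M h \<le> ereal K - enn2ereal W + (if R = \<infinity> then \<infinity> else enn2ereal R)"
    unfolding eexp_eq_parts A_def[symmetric] B_def[symmetric] using EQ WQB AER K
    by (cases A rule: ennreal_cases; cases B rule: ennreal_cases; cases E rule: ennreal_cases;
        cases Q rule: ennreal_cases; cases R rule: ennreal_cases)
      (simp_all add: top_unique ennreal_plus[symmetric] del: ennreal_plus)
  then show "eexp M h \<le> ereal K - enn2ereal W + eexp M (\<lambda>\<xi>. if ereal K \<le> h \<xi> then h \<xi> else 0)"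
    by (simp only: eexp_trunc)
qed

end

section \<open>Epi-convergence of expectations\<close>

lemma eexp_le_liminf_eexp:
  fixes P :: "'c::metric_space measure" and Ps :: "nat \<Rightarrow> 'c measure"
  assumes P: "prob_space P" "sets P = sets borel"
    and Ps: "\<And>\<nu>. prob_space (Ps \<nu>)" "\<And>\<nu>. sets (Ps \<nu>) = sets borel"
    and weak: "weak_conv Ps P"
    and h: "h \<in> borel_measurable P" and g: "\<And>\<nu>. g \<nu> \<in> borel_measurable (Ps \<nu>)"
    and lower_ui: "0 \<le> Liminf at_top (\<lambda>K::real.
          liminf (\<lambda>\<nu>. eexp (Ps \<nu>) (\<lambda>\<xi>. if g \<nu> \<xi> \<le> - ereal K then g \<nu> \<xi> else 0)))"
    and lower_pw: "AE \<xi> in P. h \<xi> \<le> liminf2 g \<xi>"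
  shows "eexp P h \<le> liminf (\<lambda>\<nu>. eexp (Ps \<nu>) (g \<nu>))"
  unfolding le_Liminf_iff
proof (intro allI impI)
  fix y assume "y < eexp P h"
  then obtain r1 r2 where "y < ereal r1" "ereal r1 < ereal r2" "ereal r2 < eexp P h"
    by (metis ereal_dense2)
  define T where "T K \<nu> = eexp (Ps \<nu>) (\<lambda>\<xi>. if g \<nu> \<xi> \<le> - ereal K then g \<nu> \<xi> else 0)" for K \<nu>
  have "eventually (\<lambda>K. - ereal (r2 - r1) < liminf (T K)) at_top"
    using lower_ui \<open>ereal r1 < ereal r2\<close> unfolding le_Liminf_iff T_def by simp
  then obtain K where K: "0 \<le> K" and T_lim: "- ereal (r2 - r1) < liminf (T K)"
    by (metis eventually_at_top_linorder max.cobounded1 max.cobounded2)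
  from T_lim have ev_T: "eventually (\<lambda>\<nu>. - ereal (r2 - r1) < T K \<nu>) sequentially"
    by (rule less_LiminfD)
  define u where "u \<nu> \<zeta> = max (g \<nu> \<zeta>) (- ereal K) + ereal K" for \<nu> \<zeta>
  have u_nonneg: "0 \<le> u \<nu> \<zeta>" for \<nu> \<zeta>
    unfolding u_def by (cases "g \<nu> \<zeta>") (auto simp: max_def)
  have "ereal r2 < enn2ereal (\<integral>\<^sup>+\<xi>. e2ennreal (max (h \<xi>) (- ereal K) + ereal K) \<partial>P) - ereal K"
    using \<open>ereal r2 < eexp P h\<close> eexp_lower_truncation(1)[OF P(1) h K] by (rule less_le_trans)
  also have "\<dots> \<le> enn2ereal (\<integral>\<^sup>+\<xi>. e2ennreal (liminf2 u \<xi>) \<partial>P) - ereal K"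
  proof -
    have "AE \<xi> in P. max (h \<xi>) (- ereal K) + ereal K \<le> liminf2 u \<xi>"
      using lower_pw
    proof eventually_elim
      case (elim \<xi>)
      then have "max (h \<xi>) (- ereal K) + ereal K \<le> max (liminf2 g \<xi>) (- ereal K) + ereal K"
        by (intro add_right_mono max.mono) auto
      also have "\<dots> \<le> liminf2 u \<xi>"
        unfolding u_def by (rule liminf2_lower_truncation)
      finally show ?case .
    qed
    then have "(\<integral>\<^sup>+\<xi>. e2ennreal (max (h \<xi>) (- ereal K) + ereal K) \<partial>P)
        \<le> (\<integral>\<^sup>+\<xi>. e2ennreal (liminf2 u \<xi>) \<partial>P)"
      by (intro nn_integral_mono_AE) (auto elim!: eventually_mono intro: e2ennreal_mono)
    then show ?thesis
      by (intro ereal_minus_mono) (auto simp: less_eq_ennreal.rep_eq)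
  qed
  finally have "ereal (r2 + K) < enn2ereal (\<integral>\<^sup>+\<xi>. e2ennreal (liminf2 u \<xi>) \<partial>P)"
    by (cases "enn2ereal (\<integral>\<^sup>+\<xi>. e2ennreal (liminf2 u \<xi>) \<partial>P)") auto
  also have "\<dots> \<le> liminf (\<lambda>\<nu>. enn2ereal (\<integral>\<^sup>+\<zeta>. e2ennreal (u \<nu> \<zeta>) \<partial>Ps \<nu>))"
    using P Ps weak u_nonneg by (rule enn2ereal_nn_integral_liminf2_le_liminf)
  finally have ev_U:
    "eventually (\<lambda>\<nu>. ereal (r2 + K) < enn2ereal (\<integral>\<^sup>+\<zeta>. e2ennreal (u \<nu> \<zeta>) \<partial>Ps \<nu>)) sequentially"
    by (rule less_LiminfD)
  from ev_T ev_U show "eventually (\<lambda>\<nu>. y < eexp (Ps \<nu>) (g \<nu>)) sequentially"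
  proof eventually_elim
    case (elim \<nu>)
    then have "ereal r1 < enn2ereal (\<integral>\<^sup>+\<zeta>. e2ennreal (u \<nu> \<zeta>) \<partial>Ps \<nu>) - ereal K + T K \<nu>"
      by (cases "enn2ereal (\<integral>\<^sup>+\<zeta>. e2ennreal (u \<nu> \<zeta>) \<partial>Ps \<nu>)"; cases "T K \<nu>") auto
    also have "\<dots> \<le> eexp (Ps \<nu>) (g \<nu>)"
      unfolding u_def T_def by (rule eexp_lower_truncation(2)[OF Ps(1) g K])
    finally show ?case using \<open>y < ereal r1\<close> by (rule less_trans[rotated])
  qed
qed

lemma limsup_eexp_le_eexp:
  fixes P :: "'c::metric_space measure" and Ps :: "nat \<Rightarrow> 'c measure"
  assumes P: "prob_space P" "sets P = sets borel"
    and Ps: "\<And>\<nu>. prob_space (Ps \<nu>)" "\<And>\<nu>. sets (Ps \<nu>) = sets borel"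
    and weak: "weak_conv Ps P"
    and h: "h \<in> borel_measurable P" and g: "\<And>\<nu>. g \<nu> \<in> borel_measurable (Ps \<nu>)"
    and upper_ui: "Limsup at_top (\<lambda>K::real.
          limsup (\<lambda>\<nu>. eexp (Ps \<nu>) (\<lambda>\<xi>. if ereal K \<le> g \<nu> \<xi> then g \<nu> \<xi> else 0))) \<le> 0"
    and upper_pw: "AE \<xi> in P. limsup2 g \<xi> \<le> h \<xi>"
  shows "limsup (\<lambda>\<nu>. eexp (Ps \<nu>) (g \<nu>)) \<le> eexp P h"
  unfolding Limsup_le_iff
proof (intro allI impI)
  fix y assume "eexp P h < y"
  then obtain r1 r2 where "eexp P h < ereal r1" "ereal r1 < ereal r2" "ereal r2 < y"
    by (metis ereal_dense2)
  define B where "B K \<nu> = eexp (Ps \<nu>) (\<lambda>\<xi>. if ereal K \<le> g \<nu> \<xi> then g \<nu> \<xi> else 0)" for K \<nu>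
  have "eventually (\<lambda>K. limsup (B K) < ereal (r2 - r1)) at_top"
    using upper_ui \<open>ereal r1 < ereal r2\<close> unfolding Limsup_le_iff B_def by simp
  then obtain K where K: "0 \<le> K" and B_lim: "limsup (B K) < ereal (r2 - r1)"
    by (metis eventually_at_top_linorder max.cobounded1 max.cobounded2)
  from B_lim have ev_B: "eventually (\<lambda>\<nu>. B K \<nu> < ereal (r2 - r1)) sequentially"
    by (rule Limsup_lessD)
  define w where "w \<nu> \<zeta> = ereal K - min (g \<nu> \<zeta>) (ereal K)" for \<nu> \<zeta>
  have w_nonneg: "0 \<le> w \<nu> \<zeta>" for \<nu> \<zeta>
    unfolding w_def by (cases "g \<nu> \<zeta>") (auto simp: min_def)
  have "ereal K - enn2ereal (\<integral>\<^sup>+\<xi>. e2ennreal (liminf2 w \<xi>) \<partial>P)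
      \<le> ereal K - enn2ereal (\<integral>\<^sup>+\<xi>. e2ennreal (ereal K - min (h \<xi>) (ereal K)) \<partial>P)"
  proof -
    have "AE \<xi> in P. ereal K - min (h \<xi>) (ereal K) \<le> liminf2 w \<xi>"
      using upper_pw
    proof eventually_elim
      case (elim \<xi>)
      then have "ereal K - min (h \<xi>) (ereal K) \<le> ereal K - min (limsup2 g \<xi>) (ereal K)"
        by (intro ereal_minus_mono min.mono) auto
      also have "\<dots> \<le> liminf2 w \<xi>"
        unfolding w_def by (rule liminf2_upper_truncation)
      finally show ?case .
    qed
    then have "(\<integral>\<^sup>+\<xi>. e2ennreal (ereal K - min (h \<xi>) (ereal K)) \<partial>P)
        \<le> (\<integral>\<^sup>+\<xi>. e2ennreal (liminf2 w \<xi>) \<partial>P)"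
      by (intro nn_integral_mono_AE) (auto elim!: eventually_mono intro: e2ennreal_mono)
    then show ?thesis
      by (intro ereal_minus_mono) (auto simp: less_eq_ennreal.rep_eq)
  qed
  also have "\<dots> \<le> eexp P h"
    by (rule eexp_upper_truncation(1)[OF P(1) h K])
  also have "\<dots> < ereal r1" by fact
  finally have "ereal (K - r1) < enn2ereal (\<integral>\<^sup>+\<xi>. e2ennreal (liminf2 w \<xi>) \<partial>P)"
    by (cases "enn2ereal (\<integral>\<^sup>+\<xi>. e2ennreal (liminf2 w \<xi>) \<partial>P)") auto
  also have "\<dots> \<le> liminf (\<lambda>\<nu>. enn2ereal (\<integral>\<^sup>+\<zeta>. e2ennreal (w \<nu> \<zeta>) \<partial>Ps \<nu>))"
    using P Ps weak w_nonneg by (rule enn2ereal_nn_integral_liminf2_le_liminf)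
  finally have ev_W:
    "eventually (\<lambda>\<nu>. ereal (K - r1) < enn2ereal (\<integral>\<^sup>+\<zeta>. e2ennreal (w \<nu> \<zeta>) \<partial>Ps \<nu>)) sequentially"
    by (rule less_LiminfD)
  from ev_B ev_W show "eventually (\<lambda>\<nu>. eexp (Ps \<nu>) (g \<nu>) < y) sequentially"
  proof eventually_elim
    case (elim \<nu>)
    have "eexp (Ps \<nu>) (g \<nu>) \<le> ereal K - enn2ereal (\<integral>\<^sup>+\<zeta>. e2ennreal (w \<nu> \<zeta>) \<partial>Ps \<nu>) + B K \<nu>"
      unfolding w_def B_def by (rule eexp_upper_truncation(2)[OF Ps(1) g K])
    also have "\<dots> < ereal r2"
      using elim by (cases "enn2ereal (\<integral>\<^sup>+\<zeta>. e2ennreal (w \<nu> \<zeta>) \<partial>Ps \<nu>)"; cases "B K \<nu>") auto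
    finally show ?case using \<open>ereal r2 < y\<close> by (rule less_trans)
  qed
qed

lemma tendsto_if_le_liminf_limsup_le:
  fixes X :: "nat \<Rightarrow> 'a::{complete_linorder, linorder_topology}"
  assumes "L \<le> liminf X" and "limsup X \<le> L"
  shows "X \<longlonglongrightarrow> L"
proof (rule Liminf_eq_Limsup)
  have "liminf X \<le> limsup X" by (rule Liminf_le_Limsup) simp
  with assms show "liminf X = L" and "limsup X = L" by auto
qed simp

lemma eexp_le_liminf_eexp_along:
  fixes P :: "'c::metric_space measure" and Ps :: "nat \<Rightarrow> 'c measure"
    and f :: "'c \<Rightarrow> 'x::metric_space \<Rightarrow> ereal" and fs :: "nat \<Rightarrow> 'c \<Rightarrow> 'x \<Rightarrow> ereal"
  assumes measures: "prob_space P" "sets P = sets borel"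
      "\<And>\<nu>. prob_space (Ps \<nu>)" "\<And>\<nu>. sets (Ps \<nu>) = sets borel" "weak_conv Ps P"
    and mf: "(\<lambda>\<xi>. f \<xi> x) \<in> borel_measurable P"
    and mfs: "\<And>\<nu> y. (\<lambda>\<xi>. fs \<nu> \<xi> y) \<in> borel_measurable (Ps \<nu>)"
    and lower_ui: "0 \<le> Liminf at_top (\<lambda>K::real.
          liminf2 (\<lambda>\<nu> y. eexp (Ps \<nu>)
             (\<lambda>\<xi>. if fs \<nu> \<xi> y \<le> - ereal K then fs \<nu> \<xi> y else 0)) x)"
    and lower_pw: "AE \<xi> in P. f \<xi> x \<le> liminf3 (\<lambda>\<nu> y \<zeta>. fs \<nu> \<zeta> y) x \<xi>"
    and xs: "xs \<longlonglongrightarrow> x"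
  shows "eexp P (\<lambda>\<xi>. f \<xi> x) \<le> liminf (\<lambda>\<nu>. eexp (Ps \<nu>) (\<lambda>\<xi>. fs \<nu> \<xi> (xs \<nu>)))"
proof (rule eexp_le_liminf_eexp[OF measures, where g="\<lambda>\<nu> \<xi>. fs \<nu> \<xi> (xs \<nu>)"])
  show "0 \<le> Liminf at_top (\<lambda>K. liminf (\<lambda>\<nu>. eexp (Ps \<nu>)
      (\<lambda>\<xi>. if fs \<nu> \<xi> (xs \<nu>) \<le> - ereal K then fs \<nu> \<xi> (xs \<nu>) else 0)))"
    using lower_ui by (rule order_trans)
      (intro Liminf_mono always_eventually allI liminf2_le_liminf_along[OF xs])
  show "AE \<xi> in P. f \<xi> x \<le> liminf2 (\<lambda>\<nu> \<zeta>. fs \<nu> \<zeta> (xs \<nu>)) \<xi>"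
    using lower_pw liminf3_le_liminf2_along[OF xs, of "\<lambda>\<nu> y \<zeta>. fs \<nu> \<zeta> y"]
    by (auto elim!: eventually_mono intro: order_trans)
qed (use mf mfs in simp_all)

lemma recovery_sequence_eexp:
  fixes P :: "'c::metric_space measure" and Ps :: "nat \<Rightarrow> 'c measure"
    and f :: "'c \<Rightarrow> 'x::metric_space \<Rightarrow> ereal" and fs :: "nat \<Rightarrow> 'c \<Rightarrow> 'x \<Rightarrow> ereal"
  assumes measures: "prob_space P" "sets P = sets borel"
      "\<And>\<nu>. prob_space (Ps \<nu>)" "\<And>\<nu>. sets (Ps \<nu>) = sets borel" "weak_conv Ps P"
    and mf: "(\<lambda>\<xi>. f \<xi> x) \<in> borel_measurable P"
    and mfs: "\<And>\<nu> y. (\<lambda>\<xi>. fs \<nu> \<xi> y) \<in> borel_measurable (Ps \<nu>)"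
    and lower: "\<And>xs. xs \<longlonglongrightarrow> x \<Longrightarrow>
      eexp P (\<lambda>\<xi>. f \<xi> x) \<le> liminf (\<lambda>\<nu>. eexp (Ps \<nu>) (\<lambda>\<xi>. fs \<nu> \<xi> (xs \<nu>)))"
    and upper: "eexp P (\<lambda>\<xi>. f \<xi> x) = \<infinity> \<or>
          (\<exists>xs. xs \<longlonglongrightarrow> x \<and>
             Limsup at_top (\<lambda>K::real. limsup (\<lambda>\<nu>. eexp (Ps \<nu>)
                (\<lambda>\<xi>. if fs \<nu> \<xi> (xs \<nu>) \<ge> ereal K then fs \<nu> \<xi> (xs \<nu>) else 0))) = 0 \<and>
             (AE \<xi> in P. limsup2 (\<lambda>\<nu> \<zeta>. fs \<nu> \<zeta> (xs \<nu>)) \<xi> \<le> f \<xi> x))"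
  shows "\<exists>xs. xs \<longlonglongrightarrow> x \<and> (\<lambda>\<nu>. eexp (Ps \<nu>) (\<lambda>\<xi>. fs \<nu> \<xi> (xs \<nu>))) \<longlonglongrightarrow> eexp P (\<lambda>\<xi>. f \<xi> x)"
proof -
  obtain xs where xs: "xs \<longlonglongrightarrow> x"
    and limsup_le: "limsup (\<lambda>\<nu>. eexp (Ps \<nu>) (\<lambda>\<xi>. fs \<nu> \<xi> (xs \<nu>))) \<le> eexp P (\<lambda>\<xi>. f \<xi> x)"
    using upper
  proof (elim disjE exE conjE)
    assume "eexp P (\<lambda>\<xi>. f \<xi> x) = \<infinity>"
    then show thesis by (intro that[of "\<lambda>_. x"]) simp_all
  next
    fix xs assume "xs \<longlonglongrightarrow> x"
      and "Limsup at_top (\<lambda>K::real. limsup (\<lambda>\<nu>. eexp (Ps \<nu>)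
              (\<lambda>\<xi>. if fs \<nu> \<xi> (xs \<nu>) \<ge> ereal K then fs \<nu> \<xi> (xs \<nu>) else 0))) = 0"
      and "AE \<xi> in P. limsup2 (\<lambda>\<nu> \<zeta>. fs \<nu> \<zeta> (xs \<nu>)) \<xi> \<le> f \<xi> x"
    then show thesis
      by (intro that[of xs] mf mfs
          limsup_eexp_le_eexp[OF measures, where g="\<lambda>\<nu> \<xi>. fs \<nu> \<xi> (xs \<nu>)"]) simp_all
  qed
  have "(\<lambda>\<nu>. eexp (Ps \<nu>) (\<lambda>\<xi>. fs \<nu> \<xi> (xs \<nu>))) \<longlonglongrightarrow> eexp P (\<lambda>\<xi>. f \<xi> x)"
    using lower[OF xs] limsup_le by (rule tendsto_if_le_liminf_limsup_le)
  with xs show ?thesis by blast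
qed

theorem theorem3p7:
  fixes P :: "'c::metric_space measure" and Ps :: "nat \<Rightarrow> 'c measure"
    and f :: "'c \<Rightarrow> 'x::metric_space \<Rightarrow> ereal"
    and fs :: "nat \<Rightarrow> 'c \<Rightarrow> 'x \<Rightarrow> ereal"
  assumes P_prob: "prob_space P" and P_sets: "sets P = sets borel"
    and Ps_prob: "\<And>\<nu>. prob_space (Ps \<nu>)" and Ps_sets: "\<And>\<nu>. sets (Ps \<nu>) = sets borel"
    and weak: "weak_conv Ps P"
    and meas_f: "\<And>x. (\<lambda>\<xi>. f \<xi> x) \<in> borel_measurable borel"
    and meas_fs: "\<And>\<nu> x. (\<lambda>\<xi>. fs \<nu> \<xi> x) \<in> borel_measurable borel"
    and lower_ui: "\<And>x. Liminf at_top (\<lambda>K::real.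
          liminf2 (\<lambda>\<nu> y. eexp (Ps \<nu>)
             (\<lambda>\<xi>. if fs \<nu> \<xi> y \<le> - ereal K then fs \<nu> \<xi> y else 0)) x) = 0"
    and lower_pw: "\<And>x. AE \<xi> in P. liminf3 (\<lambda>\<nu> y \<zeta>. fs \<nu> \<zeta> y) x \<xi> \<ge> f \<xi> x"
    and upper: "\<And>x. eexp P (\<lambda>\<xi>. f \<xi> x) = \<infinity> \<or>
          (\<exists>xs. xs \<longlonglongrightarrow> x \<and>
             Limsup at_top (\<lambda>K::real. limsup (\<lambda>\<nu>. eexp (Ps \<nu>)
                (\<lambda>\<xi>. if fs \<nu> \<xi> (xs \<nu>) \<ge> ereal K then fs \<nu> \<xi> (xs \<nu>) else 0))) = 0 \<and>
             (AE \<xi> in P. limsup2 (\<lambda>\<nu> \<zeta>. fs \<nu> \<zeta> (xs \<nu>)) \<xi> \<le> f \<xi> x))"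
  shows "epi_converges (\<lambda>\<nu> x. eexp (Ps \<nu>) (\<lambda>\<xi>. fs \<nu> \<xi> x)) (\<lambda>x. eexp P (\<lambda>\<xi>. f \<xi> x))"
proof -
  note measures = P_prob P_sets Ps_prob Ps_sets weak
  have mf: "(\<lambda>\<xi>. f \<xi> x) \<in> borel_measurable P" for x
    using meas_f by (simp add: measurable_cong_sets[OF P_sets refl])
  have mfs: "(\<lambda>\<xi>. fs \<nu> \<xi> x) \<in> borel_measurable (Ps \<nu>)" for \<nu> x
    using meas_fs by (simp add: measurable_cong_sets[OF Ps_sets refl])
  have lower: "eexp P (\<lambda>\<xi>. f \<xi> x) \<le> liminf (\<lambda>\<nu>. eexp (Ps \<nu>) (\<lambda>\<xi>. fs \<nu> \<xi> (xs \<nu>)))"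
    if "xs \<longlonglongrightarrow> x" for x xs
    using measures mf mfs lower_ui[of x, symmetric, THEN eq_refl] lower_pw[of x] that
    by (rule eexp_le_liminf_eexp_along)
  have "\<exists>xs. xs \<longlonglongrightarrow> x \<and> (\<lambda>\<nu>. eexp (Ps \<nu>) (\<lambda>\<xi>. fs \<nu> \<xi> (xs \<nu>))) \<longlonglongrightarrow> eexp P (\<lambda>\<xi>. f \<xi> x)"
    for x
    using measures mf mfs lower upper[of x] by (rule recovery_sequence_eexp)
  with lower show ?thesis
    unfolding epi_converges_def by blast
qed

end
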